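(* For every $n\ge 1$, the graph $\widehat{G}_n$ is connected, has maximum degree $3$, has $|V(\widehat{G}_n)| = 6\cdot 4^{n-1}$ vertices, and satisfies $$Z(\widehat{G}_n)\ \ge\ t_n+1=\frac{8\cdot 4^{n-1}+1}{3}\ =\ \Big(\frac49+\frac{1}{18\cdot 4^{n-1}}\Big)|V(\widehat{G}_n)|\ \ge\ \frac49\,|V(\widehat{G}_n)|.$$ In particular, the statement "$Z(G)\le \frac13|V(G)|+2$ for every connected graph $G$ of maximum degree $3$" is false.
   Context: Zero forcing: given a graph and a set $S$ of vertices initially colored black (all others white), repeatedly apply the rule: if a black vertex $v$ has exactly one white neighbor $u$, then $u$ becomes black. $S$ is a zero forcing set if eventually every vertex becomes black. $Z(G)$ is the minimum size of a zero forcing set of $G$. Subdivided $K_4$: the complete graph on 4 vertices $a,b,c,e$ with the edge $ab$ subdivided by a new vertex $s$ (5 vertices, edges $as, sb, ac, ae, bc, be, ce$); $s$ is its subdivision vertex. $B_d$ ($d\ge1$) is the complete binary tree with $2^d-1$ vertices and root $r$. $G_n$ ($n\ge1$): take $B_{2n-1}$ with root $r_n$, and for every leaf $\ell$ of $B_{2n-1}$ attach a new copy of the subdivided $K_4$ by identifying $\ell$ with its subdivision vertex. $\widehat{G}_n$ is obtained from $G_n$ by adding a new vertex $y_n$ adjacent only to $r_n$. $t_1=2$, $t_{n+1}=4t_n+2$ for $n\ge1$. *)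

theory Defs
  imports Complex_Main
begin

definition simple_graph :: "'a set \<Rightarrow> ('a \<Rightarrow> 'a \<Rightarrow> bool) \<Rightarrow> bool" where
  "simple_graph V E \<longleftrightarrow> finite V \<and> (\<forall>x y. E x y \<longrightarrow> x \<in> V \<and> y \<in> V)
     \<and> (\<forall>x y. E x y \<longrightarrow> E y x) \<and> (\<forall>x. \<not> E x x)"

definition connected_graph :: "'a set \<Rightarrow> ('a \<Rightarrow> 'a \<Rightarrow> bool) \<Rightarrow> bool" where
  "connected_graph V E \<longleftrightarrow> V \<noteq> {} \<and>
     (\<forall>u\<in>V. \<forall>v\<in>V. (\<lambda>x y. x \<in> V \<and> y \<in> V \<and> E x y)\<^sup>*\<^sup>* u v)"

definition degree :: "'a set \<Rightarrow> ('a \<Rightarrow> 'a \<Rightarrow> bool) \<Rightarrow> 'a \<Rightarrow> nat" where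
  "degree V E v = card {u \<in> V. E v u}"

definition max_degree :: "'a set \<Rightarrow> ('a \<Rightarrow> 'a \<Rightarrow> bool) \<Rightarrow> nat" where
  "max_degree V E = Max (degree V E ` V)"

definition force_step :: "'a set \<Rightarrow> ('a \<Rightarrow> 'a \<Rightarrow> bool) \<Rightarrow> 'a set \<Rightarrow> 'a set \<Rightarrow> bool" where
  "force_step V E B B' \<longleftrightarrow> (\<exists>v u. v \<in> B \<and> u \<in> V \<and> u \<notin> B \<and> E v u \<and>
      (\<forall>w\<in>V. E v w \<and> w \<notin> B \<longrightarrow> w = u) \<and> B' = insert u B)"

definition zero_forcing_set :: "'a set \<Rightarrow> ('a \<Rightarrow> 'a \<Rightarrow> bool) \<Rightarrow> 'a set \<Rightarrow> bool" where
  "zero_forcing_set V E S \<longleftrightarrow> S \<subseteq> V \<and> (force_step V E)\<^sup>*\<^sup>* S V"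

definition zero_forcing_number :: "'a set \<Rightarrow> ('a \<Rightarrow> 'a \<Rightarrow> bool) \<Rightarrow> nat" where
  "zero_forcing_number V E = (LEAST k. \<exists>S. zero_forcing_set V E S \<and> card S = k)"

text \<open>Labels of the non-subdivision vertices a, b, c, e of a subdivided K4.\<close>
datatype k4v = KA | KB | KC | KE

text \<open>Vertices: tree vertices of B_(2n-1) as binary words of length < 2n-1 (root = []),
  the four extra vertices of the K4 copy attached at leaf l, and the pendant vertex y.\<close>
datatype vtx = T "bool list" | K "bool list" k4v | Y

definition Ghat_V :: "nat \<Rightarrow> vtx set" where
  "Ghat_V n = {T w | w. length w < 2*n - 1} \<union> {K l k | l k. length l = 2*n - 2} \<union> {Y}"

definition Ghat_base_edge :: "nat \<Rightarrow> vtx \<Rightarrow> vtx \<Rightarrow> bool" where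
  "Ghat_base_edge n x y \<longleftrightarrow>
     (\<exists>w b. x = T w \<and> y = T (w @ [b]) \<and> length w + 1 < 2*n - 1) \<or>
     (\<exists>l. length l = 2*n - 2 \<and>
        (x, y) \<in> {(T l, K l KA), (T l, K l KB),
                   (K l KA, K l KC), (K l KA, K l KE), (K l KB, K l KC),
                   (K l KB, K l KE), (K l KC, K l KE)}) \<or>
     (x = Y \<and> y = T [])"

definition Ghat_E :: "nat \<Rightarrow> vtx \<Rightarrow> vtx \<Rightarrow> bool" where
  "Ghat_E n x y \<longleftrightarrow> Ghat_base_edge n x y \<or> Ghat_base_edge n y x"

text \<open>t_1 = 2, t_(n+1) = 4 t_n + 2 (value at 0 is an irrelevant extension).\<close>
primrec t :: "nat \<Rightarrow> nat" where
  "t 0 = 0"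
| "t (Suc n) = 4 * t n + 2"

end

theory Submission
  imports Defs
begin

text \<open>
  A zero forcing set meets every fort, i.e.\ every nonempty vertex set \<open>F\<close> such that no vertex
  outside \<open>F\<close> has exactly one neighbour in \<open>F\<close>: the first vertex of \<open>F\<close> could never be forced.
  Call a set \<open>F\<close> in the subtree below a tree vertex \<open>w\<close> a rooted fort if it contains \<open>w\<close> and
  only the parent of \<open>w\<close> may violate the fort condition. Two sibling rooted forts together form
  a fort, and \<open>w\<close> together with one rooted fort below a grandchild in each of its two branches
  is a rooted fort at \<open>w\<close>. Induction two levels at a time then shows: a set meeting every fort
  inside the subtree of height \<open>2m - 1\<close> has at least \<open>t\<^sub>m\<close> vertices there, and \<open>t\<^sub>m + 1\<close> if it also
  meets every rooted fort there. At the leaves this comes from the forts \<open>{a, b}\<close>, \<open>{c, e}\<close> of the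
  subdivided \<open>K\<^sub>4\<close>; at the root, the pendant vertex \<open>y\<close> turns a rooted fort into a fort.
\<close>

section \<open>Forts\<close>

definition fort_closed :: "('a \<Rightarrow> 'a \<Rightarrow> bool) \<Rightarrow> 'a set \<Rightarrow> 'a set \<Rightarrow> bool" where
  "fort_closed E U F \<longleftrightarrow>
     (\<forall>v\<in>U - F. \<forall>u\<in>F. E v u \<longrightarrow> (\<exists>u'\<in>F. u' \<noteq> u \<and> E v u'))"

definition fort :: "'a set \<Rightarrow> ('a \<Rightarrow> 'a \<Rightarrow> bool) \<Rightarrow> 'a set \<Rightarrow> bool" where
  "fort V E F \<longleftrightarrow> F \<subseteq> V \<and> F \<noteq> {} \<and> fort_closed E V F"

lemma force_step_disjoint_fort:
  assumes G: "simple_graph V E" and step: "force_step V E B B'"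
    and F: "fort V E F" and disj: "B \<inter> F = {}"
  shows "B' \<inter> F = {}"
proof -
  from step obtain v u where v: "v \<in> B" and u: "u \<notin> B" "E v u" and B': "B' = insert u B"
    and unique: "\<forall>w\<in>V. E v w \<and> w \<notin> B \<longrightarrow> w = u"
    unfolding force_step_def by blast
  have "u \<notin> F"
  proof
    assume "u \<in> F"
    moreover have "v \<in> V - F" using G u(2) v disj unfolding simple_graph_def by blast
    ultimately obtain u' where "u' \<in> F" "u' \<noteq> u" "E v u'"
      using F u(2) unfolding fort_def fort_closed_def by blast
    then show False using unique F disj unfolding fort_def by blast
  qed
  then show ?thesis using B' disj by blast
qed

lemma zero_forcing_set_meets_fort:
  assumes "simple_graph V E" "zero_forcing_set V E S" "fort V E F"
  shows "S \<inter> F \<noteq> {}"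
proof
  assume "S \<inter> F = {}"
  with assms(2) have "(force_step V E)\<^sup>*\<^sup>* S V" "S \<inter> F = {}"
    unfolding zero_forcing_set_def by blast+
  then have "V \<inter> F = {}"
  proof (induction rule: rtranclp_induct)
    case (step B B')
    then show ?case using force_step_disjoint_fort[OF assms(1) _ assms(3)] by blast
  qed
  then show False using assms(3) unfolding fort_def by blast
qed

lemma zero_forcing_number_geI:
  assumes "\<And>S. zero_forcing_set V E S \<Longrightarrow> k \<le> card S"
  shows "k \<le> zero_forcing_number V E"
proof -
  have "zero_forcing_set V E V" unfolding zero_forcing_set_def by simp
  then have "\<exists>S. zero_forcing_set V E S \<and> card S = zero_forcing_number V E"
    unfolding zero_forcing_number_def
    using LeastI_ex[where P = "\<lambda>k. \<exists>S. zero_forcing_set V E S \<and> card S = k"] by blast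
  then show ?thesis using assms by metis
qed

lemma twin_fort:
  assumes "p \<in> V" "q \<in> V" "p \<noteq> q" and twins: "\<And>v. v \<notin> {p, q} \<Longrightarrow> E v p \<longleftrightarrow> E v q"
  shows "fort V E {p, q}"
  unfolding fort_def fort_closed_def
proof (intro conjI ballI impI)
  fix v u assume "v \<in> V - {p, q}" "u \<in> {p, q}" "E v u"
  then show "\<exists>u'\<in>{p, q}. u' \<noteq> u \<and> E v u'"
    using twins[of v] \<open>p \<noteq> q\<close> by auto
qed (use assms in auto)

section \<open>Basic properties of \<open>\<widehat>G_n\<close>\<close>

lemma Ghat_E_T_T: "Ghat_E n (T w) (T w') \<longleftrightarrow>
    (\<exists>b. w' = w @ [b]) \<and> length w' < 2*n - 1 \<or> (\<exists>b. w = w' @ [b]) \<and> length w < 2*n - 1"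
  unfolding Ghat_E_def Ghat_base_edge_def by auto

lemma Ghat_E_T_K: "Ghat_E n (T w) (K l k) \<longleftrightarrow> l = w \<and> length w = 2*n - 2 \<and> k \<in> {KA, KB}"
  unfolding Ghat_E_def Ghat_base_edge_def by auto

lemma Ghat_E_K_T: "Ghat_E n (K l k) (T w) \<longleftrightarrow> l = w \<and> length w = 2*n - 2 \<and> k \<in> {KA, KB}"
  unfolding Ghat_E_def Ghat_base_edge_def by auto

lemma Ghat_E_K_K: "Ghat_E n (K l k) (K l' k') \<longleftrightarrow> l = l' \<and> length l = 2*n - 2 \<and>
    ((k, k') \<in> {(KA, KC), (KA, KE), (KB, KC), (KB, KE), (KC, KE)} \<or>
     (k', k) \<in> {(KA, KC), (KA, KE), (KB, KC), (KB, KE), (KC, KE)})"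
  unfolding Ghat_E_def Ghat_base_edge_def by auto

lemma Ghat_E_Y_left: "Ghat_E n Y x \<longleftrightarrow> x = T []"
  and Ghat_E_Y_right: "Ghat_E n x Y \<longleftrightarrow> x = T []"
  unfolding Ghat_E_def Ghat_base_edge_def by auto

lemmas Ghat_E_simps = Ghat_E_T_T Ghat_E_T_K Ghat_E_K_T Ghat_E_K_K Ghat_E_Y_left Ghat_E_Y_right

lemma T_in_Ghat_V: "T w \<in> Ghat_V n \<longleftrightarrow> length w < 2*n - 1"
  and K_in_Ghat_V: "K l k \<in> Ghat_V n \<longleftrightarrow> length l = 2*n - 2"
  and Y_in_Ghat_V: "Y \<in> Ghat_V n"
  unfolding Ghat_V_def by auto

lemmas Ghat_V_simps = T_in_Ghat_V K_in_Ghat_V Y_in_Ghat_V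

lemma Ghat_E_sym: "Ghat_E n x y \<Longrightarrow> Ghat_E n y x"
  unfolding Ghat_E_def by auto

lemma Ghat_E_in_V: "n \<ge> 1 \<Longrightarrow> Ghat_E n x y \<Longrightarrow> x \<in> Ghat_V n \<and> y \<in> Ghat_V n"
  by (cases x; cases y) (auto simp: Ghat_E_simps Ghat_V_simps)

lemma UNIV_k4v: "(UNIV :: k4v set) = {KA, KB, KC, KE}"
  using k4v.exhaust by auto

instance k4v :: finite
  by standard (simp add: UNIV_k4v)

lemma finite_bool_lists_length_eq: "finite {w :: bool list. length w = n}"
  and card_bool_lists_length_eq: "card {w :: bool list. length w = n} = 2 ^ n"
  using finite_lists_length_eq[of "UNIV :: bool set" n]
    card_lists_length_eq[of "UNIV :: bool set" n]
  by simp_all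

lemma finite_bool_lists_length_less: "finite {w :: bool list. length w < n}"
  by (rule finite_subset[of _ "\<Union>i<n. {w. length w = i}"]) (auto simp: finite_bool_lists_length_eq)

lemma card_bool_lists_length_less: "card {w :: bool list. length w < n} + 1 = 2 ^ n"
proof (induction n)
  case (Suc n)
  let ?short = "{w :: bool list. length w < n}" and ?full = "{w :: bool list. length w = n}"
  have "{w :: bool list. length w < Suc n} = ?short \<union> ?full" by auto
  moreover have "card (?short \<union> ?full) = card ?short + 2 ^ n"
    by (subst card_Un_disjoint) (auto simp: finite_bool_lists_length_less
        finite_bool_lists_length_eq card_bool_lists_length_eq)
  ultimately show ?case using Suc by simp
qed simp

lemma Ghat_V_eq:
  "Ghat_V n = T ` {w. length w < 2*n - 1} \<union> case_prod K ` ({l. length l = 2*n - 2} \<times> UNIV) \<union> {Y}"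
  unfolding Ghat_V_def by auto

lemma finite_Ghat_V: "finite (Ghat_V n)"
  unfolding Ghat_V_eq by (simp add: finite_bool_lists_length_less finite_bool_lists_length_eq)

lemma card_Ghat_V:
  assumes "n \<ge> 1" shows "card (Ghat_V n) = 6 * 4 ^ (n - 1)"
proof -
  let ?A = "T ` {w. length w < 2*n - 1}" and ?B = "case_prod K ` ({l. length l = 2*n - 2} \<times> UNIV)"
  have "card ?A + 1 = 2 ^ (2*n - 1)"
    using card_bool_lists_length_less[of "2*n - 1"] by (simp add: card_image inj_on_def)
  moreover have "card ?B = 2 ^ (2*n - 2) * 4"
    by (simp add: card_image inj_on_def card_cartesian_product card_bool_lists_length_eq UNIV_k4v)
  moreover have "finite ?A" "finite ?B"
    by (simp_all add: finite_bool_lists_length_less finite_bool_lists_length_eq)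
  then have "card (?A \<union> ?B \<union> {Y}) = card ?A + card ?B + 1"
    by (subst card_Un_disjoint, auto, subst card_Un_disjoint) auto
  moreover obtain m where "n = Suc m" using assms by (cases n) auto
  ultimately show ?thesis unfolding Ghat_V_eq by (simp add: power_mult)
qed

lemma simple_graph_Ghat: "n \<ge> 1 \<Longrightarrow> simple_graph (Ghat_V n) (Ghat_E n)"
proof -
  have "\<not> Ghat_E n x x" for x by (cases x) (simp_all add: Ghat_E_simps)
  then show "n \<ge> 1 \<Longrightarrow> ?thesis"
    unfolding simple_graph_def using finite_Ghat_V Ghat_E_in_V Ghat_E_sym by blast
qed

lemma card_le_3_if_subset: "A \<subseteq> {a, b, c} \<Longrightarrow> card A \<le> 3"
proof -
  have "card {a, b, c} \<le> 3" by (simp add: card_insert_if)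
  then show "A \<subseteq> {a, b, c} \<Longrightarrow> card A \<le> 3" using card_mono[of "{a, b, c}" A] by simp
qed

lemma degree_Ghat_le_3: "degree (Ghat_V n) (Ghat_E n) v \<le> 3"
proof -
  have nbrs: "?thesis" if "\<And>u. Ghat_E n v u \<Longrightarrow> u \<in> {a, b, c}" for a b c
    unfolding degree_def using that by (intro card_le_3_if_subset) blast
  show ?thesis
  proof (cases v)
    case (T w)
    let ?parent = "if w = [] then Y else T (butlast w)"
    show ?thesis
    proof (cases "length w = 2*n - 2")
      case True
      show ?thesis
      proof (rule nbrs)
        fix u assume "Ghat_E n v u"
        then show "u \<in> {?parent, K w KA, K w KB}"
          using T True by (cases u) (auto simp: Ghat_E_simps)
      qed
    next
      case False
      show ?thesis
      proof (rule nbrs)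
        fix u assume "Ghat_E n v u"
        then show "u \<in> {?parent, T (w @ [False]), T (w @ [True])}"
          using T False by (cases u) (auto simp: Ghat_E_simps)
      qed
    qed
  next
    case (K l k)
    show ?thesis
    proof (cases "k \<in> {KA, KB}")
      case True
      show ?thesis
      proof (rule nbrs)
        fix u assume "Ghat_E n v u"
        then show "u \<in> {T l, K l KC, K l KE}" using K True by (cases u) (auto simp: Ghat_E_simps)
      qed
    next
      case False
      show ?thesis
      proof (rule nbrs)
        fix u assume "Ghat_E n v u"
        then show "u \<in> {K l KA, K l KB, K l (if k = KC then KE else KC)}"
          using K False by (cases u) (auto simp: Ghat_E_simps)
      qed
    qed
  next
    case Y
    show ?thesis by (rule nbrs[of "T []" "T []" "T []"]) (simp add: Y Ghat_E_simps)
  qed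
qed

lemma degree_Ghat_K_KC:
  assumes "length l = 2*n - 2" shows "degree (Ghat_V n) (Ghat_E n) (K l KC) = 3"
proof -
  have "u \<in> Ghat_V n \<and> Ghat_E n (K l KC) u \<longleftrightarrow> u \<in> {K l KA, K l KB, K l KE}" for u
    using assms by (cases u) (auto simp: Ghat_E_simps Ghat_V_simps)
  then have "{u \<in> Ghat_V n. Ghat_E n (K l KC) u} = {K l KA, K l KB, K l KE}" by blast
  then show ?thesis unfolding degree_def by simp
qed

lemma max_degree_Ghat: "max_degree (Ghat_V n) (Ghat_E n) = 3"
  unfolding max_degree_def
proof (rule Max_eqI)
  have "K (replicate (2*n - 2) False) KC \<in> Ghat_V n" by (simp add: Ghat_V_simps)
  then show "3 \<in> degree (Ghat_V n) (Ghat_E n) ` Ghat_V n"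
    using degree_Ghat_K_KC[of "replicate (2*n - 2) False"] by (metis length_replicate image_eqI)
qed (use finite_Ghat_V degree_Ghat_le_3 in auto)

lemma connected_graph_Ghat:
  assumes "n \<ge> 1" shows "connected_graph (Ghat_V n) (Ghat_E n)"
proof -
  define R where "R = (\<lambda>x y. x \<in> Ghat_V n \<and> y \<in> Ghat_V n \<and> Ghat_E n x y)"
  have edge: "Ghat_E n x y \<Longrightarrow> R x y" for x y
    unfolding R_def using Ghat_E_in_V[OF assms] by blast
  have tree: "R\<^sup>*\<^sup>* (T []) (T w)" if "length w < 2*n - 1" for w
    using that
  proof (induction w rule: rev_induct)
    case (snoc b w)
    then have "R (T w) (T (w @ [b]))" by (intro edge) (simp add: Ghat_E_T_T)
    with snoc show ?case by (simp add: rtranclp.rtrancl_into_rtrancl)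
  qed simp
  have from_root: "R\<^sup>*\<^sup>* (T []) x" if "x \<in> Ghat_V n" for x
  proof (cases x)
    case (K l k)
    then have "length l = 2*n - 2" using that by (simp add: Ghat_V_simps)
    then have "R\<^sup>*\<^sup>* (T []) (T l)" "R (T l) (K l KA)" "R (K l KA) (K l KC)" "R (K l KA) (K l KE)"
        "R (T l) (K l KB)"
      using assms by (auto intro: tree edge simp: Ghat_E_simps)
    then show ?thesis using K by (cases k) (auto intro: rtranclp.rtrancl_into_rtrancl)
  next
    case Y
    then show ?thesis using edge[of "T []" Y] by (simp add: Ghat_E_simps)
  qed (use that tree in \<open>simp add: Ghat_V_simps\<close>)
  have "symp R\<^sup>*\<^sup>*"
    by (rule symp_rtranclp) (auto simp: R_def symp_def intro: Ghat_E_sym)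
  then have "R\<^sup>*\<^sup>* u v" if "u \<in> Ghat_V n" "v \<in> Ghat_V n" for u v
    using from_root that by (meson rtranclp_trans sympD)
  then show ?thesis unfolding connected_graph_def R_def using Y_in_Ghat_V by blast
qed

section \<open>Forts inside subtrees\<close>

definition subtree :: "nat \<Rightarrow> bool list \<Rightarrow> vtx set" where
  "subtree n g = {x \<in> Ghat_V n.
     case x of T w \<Rightarrow> \<exists>u. w = g @ u | K l k \<Rightarrow> \<exists>u. l = g @ u | Y \<Rightarrow> False}"

lemma T_in_subtree: "T w \<in> subtree n g \<longleftrightarrow> length w < 2*n - 1 \<and> (\<exists>u. w = g @ u)"
  and K_in_subtree: "K l k \<in> subtree n g \<longleftrightarrow> length l = 2*n - 2 \<and> (\<exists>u. l = g @ u)"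
  and Y_notin_subtree: "Y \<notin> subtree n g"
  unfolding subtree_def by (auto simp: Ghat_V_simps)

lemmas subtree_simps = T_in_subtree K_in_subtree Y_notin_subtree

lemma subtree_subset_Ghat_V: "subtree n g \<subseteq> Ghat_V n"
  unfolding subtree_def by auto

lemma subtree_mono: "subtree n (g @ h) \<subseteq> subtree n g"
  by (auto simp: subtree_def split: vtx.splits)

lemma subtree_disjoint:
  assumes "b \<noteq> b'" shows "subtree n (g @ b # h) \<inter> subtree n (g @ b' # h') = {}"
proof -
  have "x \<notin> subtree n (g @ b # h) \<inter> subtree n (g @ b' # h')" for x
    using assms by (cases x) (auto simp: subtree_simps)
  then show ?thesis by blast
qed

lemma T_notin_subtree_append: "h \<noteq> [] \<Longrightarrow> T g \<notin> subtree n (g @ h)"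
  by (simp add: T_in_subtree)

lemma subtree_leaf:
  assumes "n \<ge> 1" "length w = 2*n - 2"
  shows "subtree n w = {T w, K w KA, K w KB, K w KC, K w KE}"
proof -
  have "w' = w" if "w' = w @ u" "length w' \<le> 2*n - 2" for w' u
  proof -
    have "length u = 0" using that assms(2) by simp
    then show ?thesis using that by simp
  qed
  then have "T w' \<in> subtree n w \<longleftrightarrow> w' = w" "K w' k \<in> subtree n w \<longleftrightarrow> w' = w" for w' k
    using assms by (auto simp: subtree_simps)
  moreover have "K w k \<in> {K w KA, K w KB, K w KC, K w KE}" for k by (cases k) simp_all
  ultimately have "x \<in> subtree n w \<longleftrightarrow> x \<in> {T w, K w KA, K w KB, K w KC, K w KE}" for x
    using Y_notin_subtree by (cases x) auto
  then show ?thesis by blast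
qed

lemma subtree_neighbour:
  assumes "n \<ge> 1" "v \<in> subtree n g" "v \<noteq> T g" "Ghat_E n v u"
  shows "u \<in> subtree n g"
proof -
  have "u \<in> Ghat_V n" using Ghat_E_in_V[OF assms(1,4)] by blast
  moreover have "\<exists>x. w = g @ x \<and> x \<noteq> []" if "v = T w" for w
    using that assms(2,3) by (auto simp: T_in_subtree)
  ultimately show ?thesis
    using assms(2,4)
    by (cases v; cases u) (auto simp: subtree_simps Ghat_E_simps Ghat_V_simps,
        metis butlast_append butlast_snoc)
qed

lemma outside_neighbour_of_child:
  assumes "n \<ge> 1" "Ghat_E n v (T (g @ [b]))" "v \<notin> subtree n (g @ [b])"
  shows "v = T g"
  using assms Ghat_E_in_V[OF assms(1,2)]
  by (cases v) (auto simp: Ghat_E_simps subtree_simps Ghat_V_simps)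

lemma subtree_root_neighbour:
  assumes "Ghat_E n v (T w)" "v \<in> subtree n w" "length w < 2*n - 2"
  shows "\<exists>c. v = T (w @ [c])"
  using assms by (cases v) (auto simp: Ghat_E_simps subtree_simps)

definition subtree_fort :: "nat \<Rightarrow> bool list \<Rightarrow> vtx set \<Rightarrow> bool" where
  "subtree_fort n g F \<longleftrightarrow> fort (Ghat_V n) (Ghat_E n) F \<and> F \<subseteq> subtree n g \<and> T g \<notin> F"

definition rooted_fort :: "nat \<Rightarrow> bool list \<Rightarrow> vtx set \<Rightarrow> bool" where
  "rooted_fort n g F \<longleftrightarrow> F \<subseteq> subtree n g \<and> T g \<in> F \<and> fort_closed (Ghat_E n) (subtree n g) F"

lemma rooted_fort_neighbour:
  assumes n: "n \<ge> 1" and B: "rooted_fort n (g @ [c]) B"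
    and "u \<in> B" "Ghat_E n v u" "v \<notin> B"
  shows "(\<exists>u'\<in>B. u' \<noteq> u \<and> Ghat_E n v u') \<or> v = T g \<and> u = T (g @ [c])"
proof (cases "v \<in> subtree n (g @ [c])")
  case True
  then show ?thesis using assms unfolding rooted_fort_def fort_closed_def by blast
next
  case False
  have "u \<in> subtree n (g @ [c])" using B \<open>u \<in> B\<close> unfolding rooted_fort_def by blast
  then have "u = T (g @ [c])"
    using subtree_neighbour[OF n _ _ Ghat_E_sym[OF \<open>Ghat_E n v u\<close>]] False by blast
  then show ?thesis using outside_neighbour_of_child[OF n] False \<open>Ghat_E n v u\<close> by blast
qed

lemma sibling_rooted_forts_union:
  assumes n: "n \<ge> 1" and len: "length w + 2 \<le> 2*n - 2"
    and B: "\<And>c. rooted_fort n (w @ [b, c]) (B c)"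
  shows "subtree_fort n w (B False \<union> B True)"
proof -
  have B_subtree: "B c \<subseteq> subtree n (w @ [b, c])" and root: "T (w @ [b, c]) \<in> B c" for c
    using B unfolding rooted_fort_def by blast+
  have B_Un: "B c \<subseteq> B False \<union> B True" for c by (cases c) auto
  have "fort_closed (Ghat_E n) (Ghat_V n) (B False \<union> B True)"
    unfolding fort_closed_def
  proof (intro ballI impI)
    fix v u assume v: "v \<in> Ghat_V n - (B False \<union> B True)" and u: "u \<in> B False \<union> B True"
      and e: "Ghat_E n v u"
    obtain c where c: "u \<in> B c" using u by blast
    have "rooted_fort n ((w @ [b]) @ [c]) (B c)" using B by simp
    moreover have "v \<notin> B c" using v B_Un by blast
    ultimately consider "\<exists>u'\<in>B c. u' \<noteq> u \<and> Ghat_E n v u'"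
      | "v = T (w @ [b])" "u = T (w @ [b, c])"
      using rooted_fort_neighbour[OF n _ c e, of "w @ [b]"] by auto
    then show "\<exists>u'\<in>B False \<union> B True. u' \<noteq> u \<and> Ghat_E n v u'"
    proof cases
      case 2
      moreover have "Ghat_E n (T (w @ [b])) (T (w @ [b, \<not> c]))" using len by (simp add: Ghat_E_T_T)
      ultimately show ?thesis
        using root[of "\<not> c"] B_Un by (intro bexI[of _ "T (w @ [b, \<not> c])"]) auto
    qed (use B_Un in blast)
  qed
  moreover have "B c \<subseteq> subtree n w" "T w \<notin> B c" for c
    using B_subtree[of c] subtree_mono[of n w "[b, c]"] T_notin_subtree_append[of "[b, c]" w]
    by auto
  then have "B False \<union> B True \<subseteq> subtree n w" "T w \<notin> B False \<union> B True" by auto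
  ultimately show ?thesis
    unfolding subtree_fort_def fort_def using subtree_subset_Ghat_V root by blast
qed

lemma rooted_forts_extend:
  assumes n: "n \<ge> 1" and len: "length w + 2 \<le> 2*n - 2"
    and B: "\<And>b. rooted_fort n (w @ [b, c b]) (B b)"
  shows "rooted_fort n w (insert (T w) (B False \<union> B True))"
proof -
  let ?F = "insert (T w) (B False \<union> B True)"
  have B_subtree: "B b \<subseteq> subtree n w" and root: "T (w @ [b, c b]) \<in> B b" for b
    using B[of b] subtree_mono[of n w "[b, c b]"] unfolding rooted_fort_def by blast+
  have B_F: "B b \<subseteq> ?F" for b by (cases b) auto
  have child_E: "Ghat_E n (T (w @ [b])) (T w)" "Ghat_E n (T (w @ [b])) (T (w @ [b, c b]))" for b
    using len by (simp_all add: Ghat_E_T_T)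
  have "fort_closed (Ghat_E n) (subtree n w) ?F"
    unfolding fort_closed_def
  proof (intro ballI impI)
    fix v u assume v: "v \<in> subtree n w - ?F" and u: "u \<in> ?F" and e: "Ghat_E n v u"
    show "\<exists>u'\<in>?F. u' \<noteq> u \<and> Ghat_E n v u'"
    proof (cases "u = T w")
      case True
      then obtain b where "v = T (w @ [b])"
        using subtree_root_neighbour[of n v w] v e len by auto
      then show ?thesis
        using True root[of b] B_F[of b] child_E(2)[of b]
        by (intro bexI[of _ "T (w @ [b, c b])"]) auto
    next
      case False
      then obtain b where b: "u \<in> B b" using u by blast
      have "rooted_fort n ((w @ [b]) @ [c b]) (B b)" using B by simp
      moreover have "v \<notin> B b" using v B_F by blast
      ultimately consider "\<exists>u'\<in>B b. u' \<noteq> u \<and> Ghat_E n v u'"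
        | "v = T (w @ [b])" "u = T (w @ [b, c b])"
        using rooted_fort_neighbour[OF n _ b e, of "w @ [b]"] by auto
      then show ?thesis
      proof cases
        case 2
        then show ?thesis using child_E(1)[of b] by (intro bexI[of _ "T w"]) auto
      qed (use B_F in blast)
    qed
  qed
  moreover have "T w \<in> subtree n w" using len by (simp add: T_in_subtree)
  ultimately show ?thesis unfolding rooted_fort_def using B_subtree by blast
qed

lemma subtree_fort_grandchild:
  "subtree_fort n (w @ [b, c]) F \<Longrightarrow> subtree_fort n w F"
  using subtree_mono[of n w "[b, c]"] T_notin_subtree_append[of "[b, c]" w]
  unfolding subtree_fort_def by blast

lemma leaf_subtree_forts:
  assumes "n \<ge> 1" "length w = 2*n - 2"
  shows "subtree_fort n w {K w KA, K w KB}" "subtree_fort n w {K w KC, K w KE}"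
proof -
  have "Ghat_E n v (K w KA) \<longleftrightarrow> Ghat_E n v (K w KB)" for v
    by (cases v) (auto simp: Ghat_E_simps)
  moreover have "Ghat_E n v (K w KC) \<longleftrightarrow> Ghat_E n v (K w KE)" if "v \<notin> {K w KC, K w KE}" for v
    using that by (cases v) (auto simp: Ghat_E_simps)
  ultimately have "fort (Ghat_V n) (Ghat_E n) {K w KA, K w KB}"
    and "fort (Ghat_V n) (Ghat_E n) {K w KC, K w KE}"
    using assms(2) by (auto intro!: twin_fort simp: K_in_Ghat_V)
  then show "subtree_fort n w {K w KA, K w KB}" "subtree_fort n w {K w KC, K w KE}"
    unfolding subtree_fort_def subtree_leaf[OF assms] by auto
qed

lemma leaf_rooted_fort:
  assumes "n \<ge> 1" "length w = 2*n - 2" "x \<in> {KA, KB}" "z \<in> {KC, KE}"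
  shows "rooted_fort n w {T w, K w x, K w z}"
  using assms(3,4) unfolding rooted_fort_def fort_closed_def subtree_leaf[OF assms(1,2)]
  by (auto simp: Ghat_E_simps assms(2))

section \<open>Counting the vertices of a zero forcing set\<close>

definition meets_subtree_forts :: "nat \<Rightarrow> vtx set \<Rightarrow> bool list \<Rightarrow> bool" where
  "meets_subtree_forts n S g \<longleftrightarrow> (\<forall>F. subtree_fort n g F \<longrightarrow> S \<inter> F \<noteq> {})"

definition meets_rooted_forts :: "nat \<Rightarrow> vtx set \<Rightarrow> bool list \<Rightarrow> bool" where
  "meets_rooted_forts n S g \<longleftrightarrow> (\<forall>F. rooted_fort n g F \<longrightarrow> S \<inter> F \<noteq> {})"

lemma meets_subtree_forts_grandchild:
  "meets_subtree_forts n S w \<Longrightarrow> meets_subtree_forts n S (w @ [b, c])"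
  unfolding meets_subtree_forts_def using subtree_fort_grandchild by blast

lemma meets_rooted_forts_sibling:
  assumes "n \<ge> 1" "length w + 2 \<le> 2*n - 2" "meets_subtree_forts n S w"
  shows "meets_rooted_forts n S (w @ [b, False]) \<or> meets_rooted_forts n S (w @ [b, True])"
proof (rule ccontr)
  assume "\<not> ?thesis"
  then have "\<forall>c. \<exists>B. rooted_fort n (w @ [b, c]) B \<and> S \<inter> B = {}"
    unfolding meets_rooted_forts_def by (metis (full_types))
  then obtain B where "\<And>c. rooted_fort n (w @ [b, c]) (B c)" "\<And>c. S \<inter> B c = {}" by metis
  then show False
    using sibling_rooted_forts_union[OF assms(1,2)] assms(3)
    unfolding meets_subtree_forts_def by blast
qed

lemma meets_rooted_forts_grandchildren:
  assumes "n \<ge> 1" "length w + 2 \<le> 2*n - 2" "meets_rooted_forts n S w" "T w \<notin> S"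
  shows "\<exists>b. \<forall>c. meets_rooted_forts n S (w @ [b, c])"
proof (rule ccontr)
  assume "\<not> ?thesis"
  then have "\<forall>b. \<exists>c B. rooted_fort n (w @ [b, c]) B \<and> S \<inter> B = {}"
    unfolding meets_rooted_forts_def by blast
  then obtain c B where "\<And>b. rooted_fort n (w @ [b, c b]) (B b)" "\<And>b. S \<inter> B b = {}" by metis
  then show False
    using rooted_forts_extend[OF assms(1,2)] assms(3,4) unfolding meets_rooted_forts_def by blast
qed

lemma finite_subtree: "finite (subtree n g)"
  using finite_subset[OF subtree_subset_Ghat_V finite_Ghat_V] .

lemma card_leaf_subtree:
  assumes n: "n \<ge> 1" and len: "length w = 2*n - 2" and S: "meets_subtree_forts n S w"
  shows "2 \<le> card (S \<inter> subtree n w)"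
    and "meets_rooted_forts n S w \<Longrightarrow> 3 \<le> card (S \<inter> subtree n w)"
proof -
  have fin: "finite (S \<inter> subtree n w)" by (simp add: finite_subtree)
  obtain p q where p: "p \<in> S" "p \<in> {K w KA, K w KB}" and q: "q \<in> S" "q \<in> {K w KC, K w KE}"
    using S leaf_subtree_forts[OF n len] unfolding meets_subtree_forts_def by blast
  then have pq: "{p, q} \<subseteq> S \<inter> subtree n w" "card {p, q} = 2"
    by (auto simp: subtree_leaf[OF n len])
  then show two: "2 \<le> card (S \<inter> subtree n w)" using card_mono[OF fin] by metis
  assume rooted: "meets_rooted_forts n S w"
  show "3 \<le> card (S \<inter> subtree n w)"
  proof (rule ccontr)
    assume "\<not> ?thesis"
    then have "S \<inter> subtree n w = {p, q}"
      using two pq card_subset_eq[OF fin pq(1)] by simp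
    moreover obtain x z where xz: "x \<in> {KA, KB}" "K w x \<noteq> p" "z \<in> {KC, KE}" "K w z \<noteq> q"
      using p(2) q(2) by blast
    moreover have "{T w, K w x, K w z} \<subseteq> subtree n w"
      using xz(1,3) by (auto simp: subtree_leaf[OF n len])
    ultimately have "S \<inter> {T w, K w x, K w z} = {}" using p(2) q(2) by auto
    then show False
      using rooted leaf_rooted_fort[OF n len xz(1,3)] unfolding meets_rooted_forts_def by blast
  qed
qed

lemma card_subtree_ge_grandchildren:
  assumes len: "length w + 2 \<le> 2*n - 2"
  shows "card (S \<inter> {T w, T (w @ [False]), T (w @ [True])})
      + (\<Sum>b\<in>UNIV. \<Sum>c\<in>UNIV. card (S \<inter> subtree n (w @ [b, c]))) \<le> card (S \<inter> subtree n w)"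
proof -
  let ?top = "S \<inter> {T w, T (w @ [False]), T (w @ [True])}"
  let ?Q = "\<lambda>b c. S \<inter> subtree n (w @ [b, c])"
  have fin: "finite (?Q b c)" for b c by (simp add: finite_subtree)
  have "card (\<Union>c. ?Q b c) = (\<Sum>c\<in>UNIV. card (?Q b c))" for b
    using subtree_disjoint[of _ _ n "w @ [b]" "[]" "[]"]
    by (intro card_UN_disjoint) (auto simp: fin)
  moreover have "(\<Union>c. ?Q b c) \<inter> (\<Union>c. ?Q b' c) = {}" if "b \<noteq> b'" for b b'
    using subtree_disjoint[OF that, of n w] by blast
  then have "card (\<Union>b. \<Union>c. ?Q b c) = (\<Sum>b\<in>UNIV. card (\<Union>c. ?Q b c))"
    by (intro card_UN_disjoint) (auto intro: finite_Int simp: finite_subtree)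
  moreover have "card (?top \<union> (\<Union>b. \<Union>c. ?Q b c)) = card ?top + card (\<Union>b. \<Union>c. ?Q b c)"
  proof (rule card_Un_disjoint)
    show "finite (\<Union>b. \<Union>c. ?Q b c)"
      by (rule finite_subset[OF _ finite_Ghat_V]) (use subtree_subset_Ghat_V in blast)
  qed (auto simp: subtree_simps)
  moreover have "?top \<union> (\<Union>b. \<Union>c. ?Q b c) \<subseteq> S \<inter> subtree n w"
    using len subtree_mono[of n w] by (auto simp: T_in_subtree)
  ultimately show ?thesis
    using card_mono[OF _ \<open>?top \<union> _ \<subseteq> _\<close>] finite_subtree by (simp add: finite_subtree)
qed

lemma card_subtree_step:
  assumes n: "n \<ge> 1" and len: "length w + 2 \<le> 2*n - 2" and S: "meets_subtree_forts n S w"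
    and IH: "\<And>b c. t m \<le> card (S \<inter> subtree n (w @ [b, c]))"
      "\<And>b c. meets_rooted_forts n S (w @ [b, c]) \<Longrightarrow> t m + 1 \<le> card (S \<inter> subtree n (w @ [b, c]))"
  shows "t (Suc m) \<le> card (S \<inter> subtree n w)"
    and "meets_rooted_forts n S w \<Longrightarrow> t (Suc m) + 1 \<le> card (S \<inter> subtree n w)"
proof -
  let ?q = "\<lambda>b c. card (S \<inter> subtree n (w @ [b, c]))"
  let ?top = "card (S \<inter> {T w, T (w @ [False]), T (w @ [True])})"
  have split: "?top + (?q False False + ?q False True + (?q True False + ?q True True))
      \<le> card (S \<inter> subtree n w)"
    using card_subtree_ge_grandchildren[OF len, of S] by (simp add: UNIV_bool)
  have pair: "2 * t m + 1 \<le> ?q b False + ?q b True" for b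
    using meets_rooted_forts_sibling[OF n len S, of b] IH(1)[of b False] IH(1)[of b True]
      IH(2)[of b False] IH(2)[of b True]
    by (elim disjE) linarith+
  show "t (Suc m) \<le> card (S \<inter> subtree n w)"
    using split pair[of False] pair[of True] by simp
  assume rooted: "meets_rooted_forts n S w"
  show "t (Suc m) + 1 \<le> card (S \<inter> subtree n w)"
  proof (cases "T w \<in> S")
    case True
    then have "1 \<le> ?top" by (simp add: card_gt_0_iff Suc_le_eq)
    then show ?thesis using split pair[of False] pair[of True] by simp
  next
    case False
    then obtain b where "\<forall>c. meets_rooted_forts n S (w @ [b, c])"
      using meets_rooted_forts_grandchildren[OF n len rooted] by blast
    then have "2 * t m + 2 \<le> ?q b False + ?q b True"
      using IH(2)[of b False] IH(2)[of b True] by simp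
    then show ?thesis using split pair[of False] pair[of True] by (cases b) simp_all
  qed
qed

lemma card_subtree_ge_t:
  assumes n: "n \<ge> 1" and "1 \<le> m" "m \<le> n" "length w = 2 * (n - m)" "meets_subtree_forts n S w"
  shows "t m \<le> card (S \<inter> subtree n w)"
    and "meets_rooted_forts n S w \<Longrightarrow> t m + 1 \<le> card (S \<inter> subtree n w)"
proof -
  have "t m \<le> card (S \<inter> subtree n w) \<and>
      (meets_rooted_forts n S w \<longrightarrow> t m + 1 \<le> card (S \<inter> subtree n w))"
    using assms(2-5)
  proof (induction m arbitrary: w rule: nat_induct_at_least)
    case base
    then have "length w = 2*n - 2" by simp
    then show ?case using card_leaf_subtree[OF n _ base(3)] by (simp add: eval_nat_numeral)
  next
    case (Suc m)
    have len: "length w + 2 \<le> 2*n - 2" using Suc by simp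
    have "t m \<le> card (S \<inter> subtree n (w @ [b, c])) \<and>
        (meets_rooted_forts n S (w @ [b, c]) \<longrightarrow> t m + 1 \<le> card (S \<inter> subtree n (w @ [b, c])))"
      for b c using Suc meets_subtree_forts_grandchild by simp
    then show ?case using card_subtree_step[OF n len Suc.prems(3)] by blast
  qed
  then show "t m \<le> card (S \<inter> subtree n w)"
    and "meets_rooted_forts n S w \<Longrightarrow> t m + 1 \<le> card (S \<inter> subtree n w)" by blast+
qed

lemma Ghat_V_eq_insert_subtree_Nil: "Ghat_V n = insert Y (subtree n [])"
proof -
  have "x \<in> Ghat_V n \<longleftrightarrow> x = Y \<or> x \<in> subtree n []" for x
    by (cases x) (simp_all add: subtree_simps Ghat_V_simps)
  then show ?thesis by blast
qed

lemma rooted_fort_Nil_insert_Y: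
  assumes "n \<ge> 1" "rooted_fort n [] F"
  shows "fort (Ghat_V n) (Ghat_E n) (insert Y F)"
proof -
  have "fort_closed (Ghat_E n) (Ghat_V n) (insert Y F)"
    unfolding fort_closed_def
  proof (intro ballI impI)
    fix v u assume v: "v \<in> Ghat_V n - insert Y F" and u: "u \<in> insert Y F" and e: "Ghat_E n v u"
    have "u \<noteq> Y" using assms(2) v e unfolding rooted_fort_def by (auto simp: Ghat_E_simps)
    then show "\<exists>u'\<in>insert Y F. u' \<noteq> u \<and> Ghat_E n v u'"
      using assms(2) u v e unfolding rooted_fort_def fort_closed_def Ghat_V_eq_insert_subtree_Nil
      by blast
  qed
  then show ?thesis
    using assms(2) subtree_subset_Ghat_V Y_in_Ghat_V unfolding fort_def rooted_fort_def by blast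
qed

lemma card_zero_forcing_set_Ghat:
  assumes n: "n \<ge> 1" and S: "zero_forcing_set (Ghat_V n) (Ghat_E n) S"
  shows "t n + 1 \<le> card S"
proof -
  have meets: "S \<inter> F \<noteq> {}" if "fort (Ghat_V n) (Ghat_E n) F" for F
    using zero_forcing_set_meets_fort[OF simple_graph_Ghat[OF n] S that] .
  have fin: "finite S"
    using S finite_subset[OF _ finite_Ghat_V] unfolding zero_forcing_set_def by blast
  have "meets_subtree_forts n S []"
    unfolding meets_subtree_forts_def subtree_fort_def using meets by blast
  note count = card_subtree_ge_t[OF n _ order_refl _ this]
  show ?thesis
  proof (cases "Y \<in> S")
    case True
    then have "insert Y (S \<inter> subtree n []) \<subseteq> S" by blast
    then have "card (insert Y (S \<inter> subtree n [])) \<le> card S" by (rule card_mono[OF fin])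
    then have "card (S \<inter> subtree n []) + 1 \<le> card S"
      using Y_notin_subtree finite_subtree by simp
    then show ?thesis using count(1) n by simp
  next
    case False
    then have "meets_rooted_forts n S []"
      unfolding meets_rooted_forts_def using meets rooted_fort_Nil_insert_Y[OF n] by blast
    then show ?thesis using count(2) n card_mono[OF fin, of "S \<inter> subtree n []"] by simp
  qed
qed

lemma zero_forcing_number_Ghat_ge: "n \<ge> 1 \<Longrightarrow> t n + 1 \<le> zero_forcing_number (Ghat_V n) (Ghat_E n)"
  by (rule zero_forcing_number_geI) (rule card_zero_forcing_set_Ghat)

lemma t_closed_form: "n \<ge> 1 \<Longrightarrow> 3 * (t n + 1) = 8 * 4 ^ (n - 1) + 1"
proof (induction n rule: nat_induct_at_least)
  case (Suc n)
  then obtain k where "n = Suc k" by (cases n) auto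
  with Suc show ?case by simp
qed simp

lemma real_t_closed_form:
  assumes "n \<ge> 1" shows "real (t n + 1) = (8 * 4 ^ (n - 1) + 1) / 3"
proof -
  have "real (3 * (t n + 1)) = real (8 * 4 ^ (n - 1) + 1)" by (simp only: t_closed_form[OF assms])
  then show ?thesis by simp
qed

lemma real_t_density:
  assumes "n \<ge> 1"
  shows "real (t n + 1) = (4 / 9 + 1 / (18 * 4 ^ (n - 1))) * real (card (Ghat_V n))"
proof -
  have "(0::real) < 4 ^ (n - 1)" by simp
  then show ?thesis
    unfolding real_t_closed_form[OF assms] card_Ghat_V[OF assms] by (simp add: field_simps)
qed

theorem mainTheorem2:
  shows "(\<forall>n\<ge>1.
      simple_graph (Ghat_V n) (Ghat_E n) \<and>
      connected_graph (Ghat_V n) (Ghat_E n) \<and>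
      max_degree (Ghat_V n) (Ghat_E n) = 3 \<and>
      card (Ghat_V n) = 6 * 4 ^ (n - 1) \<and>
      zero_forcing_number (Ghat_V n) (Ghat_E n) \<ge> t n + 1 \<and>
      real (t n + 1) = (8 * 4 ^ (n - 1) + 1) / 3 \<and>
      real (t n + 1) = (4 / 9 + 1 / (18 * 4 ^ (n - 1))) * real (card (Ghat_V n)) \<and>
      (4 / 9 + 1 / (18 * 4 ^ (n - 1))) * real (card (Ghat_V n)) \<ge> 4 / 9 * real (card (Ghat_V n)))
   \<and> \<not> (\<forall>(V :: vtx set) E. simple_graph V E \<and> connected_graph V E \<and> max_degree V E = 3
          \<longrightarrow> real (zero_forcing_number V E) \<le> real (card V) / 3 + 2)"
proof
  show "\<forall>n\<ge>1. simple_graph (Ghat_V n) (Ghat_E n) \<and> connected_graph (Ghat_V n) (Ghat_E n) \<and>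
      max_degree (Ghat_V n) (Ghat_E n) = 3 \<and> card (Ghat_V n) = 6 * 4 ^ (n - 1) \<and>
      zero_forcing_number (Ghat_V n) (Ghat_E n) \<ge> t n + 1 \<and>
      real (t n + 1) = (8 * 4 ^ (n - 1) + 1) / 3 \<and>
      real (t n + 1) = (4 / 9 + 1 / (18 * 4 ^ (n - 1))) * real (card (Ghat_V n)) \<and>
      (4 / 9 + 1 / (18 * 4 ^ (n - 1))) * real (card (Ghat_V n)) \<ge> 4 / 9 * real (card (Ghat_V n))"
    by (intro allI impI conjI simple_graph_Ghat connected_graph_Ghat max_degree_Ghat card_Ghat_V
        zero_forcing_number_Ghat_ge real_t_closed_form real_t_density) (simp_all add: distrib_right)
next
  have "11 \<le> zero_forcing_number (Ghat_V 2) (Ghat_E 2)"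
    using zero_forcing_number_Ghat_ge[of 2] by (simp add: eval_nat_numeral)
  moreover have "card (Ghat_V 2) = 24" using card_Ghat_V[of 2] by simp
  ultimately show "\<not> (\<forall>(V :: vtx set) E. simple_graph V E \<and> connected_graph V E \<and> max_degree V E = 3
      \<longrightarrow> real (zero_forcing_number V E) \<le> real (card V) / 3 + 2)"
    using simple_graph_Ghat[of 2] connected_graph_Ghat[of 2] max_degree_Ghat[of 2] by fastforce
qed

end
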